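(* Let $R_1,R_2>0$, $E_2\in\mathbb{R}$, and consider the two-source resistive circuit described in the context with $E_1=0$. Let $\mathrm{Loss}'=E_2^2/(R_1+R_2)$ be the total heat loss without the cross link, and for $R_3>0$ let $\mathrm{Loss}(R_3)=i_1^2R_1+i_2^2R_2+i_3^2R_3$ be the total heat loss with the cross link of resistance $R_3$ connected. Then $$\lim_{R_3\to0^+}\mathrm{Loss}(R_3)=\Big(\frac{R_1}{R_2}+1\Big)\mathrm{Loss}',$$ i.e. (when $E_2\neq 0$) the Loss Cost of the Link $\mathrm{LCL}=\mathrm{Loss}(R_3)/\mathrm{Loss}'$ tends to $R_1/R_2+1\ge 1$ as $R_3\to0^+$.
   Context: The circuit consists of two DC voltage sources $E_1,E_2$ and resistors $R_1,R_2>0$, arranged in a single loop so that, when the cross link is absent, the same current flows through $R_1$ and $R_2$: $i_1=i_2=(E_1+E_2)/(R_1+R_2)$, $i_3=0$. A cross link containing a resistor $R_3>0$ can be connected between the two branches; when it is connected, the currents through $R_1,R_2,R_3$ are $$i_1=\frac{E_1(R_2+R_3)+E_2R_3}{R_1R_2+R_1R_3+R_2R_3},\quad i_2=\frac{E_1R_3+E_2(R_1+R_3)}{R_1R_2+R_1R_3+R_2R_3},\quad i_3=\frac{-E_1R_2+E_2R_1}{R_1R_2+R_1R_3+R_2R_3}.$$ The Loss Cost of the Link (LCL) is the ratio $\mathrm{Loss}/\mathrm{Loss}'$ of the total network heat loss after adding the link ($\mathrm{Loss}$) to that before adding it ($\mathrm{Loss}'$). *)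

theory Defs
  imports Complex_Main
begin

definition link_den :: "real \<Rightarrow> real \<Rightarrow> real \<Rightarrow> real" where
  "link_den R1 R2 R3 = R1*R2 + R1*R3 + R2*R3"

definition i1 :: "real \<Rightarrow> real \<Rightarrow> real \<Rightarrow> real \<Rightarrow> real \<Rightarrow> real" where
  "i1 E1 E2 R1 R2 R3 = (E1*(R2+R3) + E2*R3) / link_den R1 R2 R3"

definition i2 :: "real \<Rightarrow> real \<Rightarrow> real \<Rightarrow> real \<Rightarrow> real \<Rightarrow> real" where
  "i2 E1 E2 R1 R2 R3 = (E1*R3 + E2*(R1+R3)) / link_den R1 R2 R3"

definition i3 :: "real \<Rightarrow> real \<Rightarrow> real \<Rightarrow> real \<Rightarrow> real \<Rightarrow> real" where
  "i3 E1 E2 R1 R2 R3 = (- E1*R2 + E2*R1) / link_den R1 R2 R3"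

definition Loss :: "real \<Rightarrow> real \<Rightarrow> real \<Rightarrow> real \<Rightarrow> real \<Rightarrow> real" where
  "Loss E1 E2 R1 R2 R3 =
     (i1 E1 E2 R1 R2 R3)^2 * R1 + (i2 E1 E2 R1 R2 R3)^2 * R2 + (i3 E1 E2 R1 R2 R3)^2 * R3"

text \<open>Total heat loss without the link: i1 = i2 = (E1+E2)/(R1+R2), i3 = 0.\<close>
definition Loss' :: "real \<Rightarrow> real \<Rightarrow> real \<Rightarrow> real \<Rightarrow> real" where
  "Loss' E1 E2 R1 R2 = ((E1+E2)/(R1+R2))^2 * R1 + ((E1+E2)/(R1+R2))^2 * R2"

end

theory Submission
  imports Defs
begin

(* The link currents are rational in R3 with denominator R1 R2 > 0 at R3 = 0, so the
   loss is continuous there; shorting the link (R3 = 0) decouples the two sources into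
   independent loops through R1 and R2, giving the limit E1^2/R1 + E2^2/R2.  With E1 = 0
   this is E2^2/R2 = (R1/R2 + 1) E2^2/(R1 + R2). *)

lemma Loss'_eq:
  assumes "R1 + R2 \<noteq> 0"
  shows "Loss' E1 E2 R1 R2 = (E1 + E2)^2 / (R1 + R2)"
proof -
  have "Loss' E1 E2 R1 R2 = ((E1 + E2) / (R1 + R2))^2 * (R1 + R2)"
    unfolding Loss'_def by (simp add: distrib_left)
  also have "\<dots> = (E1 + E2)^2 / (R1 + R2)"
    using assms by (simp add: power2_eq_square)
  finally show ?thesis .
qed

lemma Loss_short_link:
  assumes "R1 \<noteq> 0" and "R2 \<noteq> 0"
  shows "Loss E1 E2 R1 R2 0 = E1^2 / R1 + E2^2 / R2"
  using assms unfolding Loss_def i1_def i2_def i3_def link_den_def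
  by (simp add: power2_eq_square field_simps)

lemma tendsto_Loss_short_link:
  assumes "R1 \<noteq> 0" and "R2 \<noteq> 0"
  shows "((\<lambda>R3. Loss E1 E2 R1 R2 R3) \<longlongrightarrow> E1^2 / R1 + E2^2 / R2) (at 0)"
proof -
  have "link_den R1 R2 0 \<noteq> 0"
    using assms by (simp add: link_den_def)
  then have "((\<lambda>R3. Loss E1 E2 R1 R2 R3) \<longlongrightarrow> Loss E1 E2 R1 R2 0) (at 0)"
    unfolding Loss_def i1_def i2_def i3_def link_den_def
    by (intro tendsto_intros) auto
  then show ?thesis
    using Loss_short_link[OF assms] by simp
qed

theorem corollary1:
  fixes R1 R2 E2 :: real
  assumes "R1 > 0" and "R2 > 0"
  shows "((\<lambda>R3. Loss 0 E2 R1 R2 R3) \<longlongrightarrow> (R1/R2 + 1) * Loss' 0 E2 R1 R2) (at_right 0)"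
proof -
  have "(R1/R2 + 1) * Loss' 0 E2 R1 R2 = 0^2 / R1 + E2^2 / R2"
  proof -
    have "R1/R2 + 1 = (R1 + R2) / R2"
      using assms by (simp add: field_simps)
    then have "(R1/R2 + 1) * (E2^2 / (R1 + R2)) = E2^2 / R2"
      using assms by simp
    then show ?thesis
      using assms by (simp add: Loss'_eq)
  qed
  moreover have "((\<lambda>R3. Loss 0 E2 R1 R2 R3) \<longlongrightarrow> 0^2 / R1 + E2^2 / R2) (at 0)"
    using assms by (intro tendsto_Loss_short_link) auto
  ultimately show ?thesis
    by (simp add: filterlim_at_split)
qed

end
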